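(* For every pacing function $\mu:\Theta\to\mathbb{R}_{\ge0}$ and every $(w,B)\in\Theta'$, the function $t\mapsto q^\mu(w,B,t)$ is differentiable on $(-1/2,\infty)$, with $\frac{\partial q^\mu(w,B,t)}{\partial t}=B-\mathbb{E}_{\alpha\sim F}\Big[\sigma^\mu_\alpha\Big(\frac{w^T\alpha}{1+t}\Big)H^\mu_\alpha\Big(\frac{w^T\alpha}{1+t}\Big)\mathbf 1\Big\{\frac{w^T\alpha}{1+t}\ge r(\alpha)\Big\}\Big].$
   Context: Setting. Fix integers $n\ge 2$ and $d\ge 2$, and constants $U>0$, $B_{\min}>0$. Buyer types are $(w,B)\in\Theta:=(0,U)^d\times(B_{\min},U)$; $\Theta_w:=(0,U)^d$. Item types are $\alpha\in A\subset\mathbb{R}^d_{+}$ (strictly positive orthant); all sets carry the Lebesgue $\sigma$-algebra. $F$ is a probability distribution on $A$ with a density and $G$ a probability distribution on $\Theta$ with a density. Buyer $(w,B)$ values item $\alpha$ at $w^T\alpha$; $\omega>0$ is a constant with $w^T\alpha\le\omega$ for all $w\in\Theta_w,\alpha\in A$. Reserve prices: measurable $r:A\to(0,\infty)$. A pacing function is a measurable $\mu:\Theta\to\mathbb{R}_{\ge0}$. For $\alpha\in A$, $\lambda^\mu_\alpha$ is the distribution of $w^T\alpha/(1+\mu(w,B))$ when $(w,B)\sim G$, and $H^\mu_\alpha$ the distribution of the maximum of $n-1$ i.i.d. draws from $\lambda^\mu_\alpha$; $H^\mu_\alpha(x):=\lambda^\mu_\alpha((-\infty,x])^{n-1}$.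 Define $\sigma^\mu_\alpha(x)=x$ if $x<r(\alpha)$; for $x\ge r(\alpha)$, $\sigma^\mu_\alpha(x)=x-\int_{r(\alpha)}^x \frac{H^\mu_\alpha(s)}{H^\mu_\alpha(x)}ds$ if $H^\mu_\alpha(x)>0$ and $\sigma^\mu_\alpha(x)=r(\alpha)$ if $H^\mu_\alpha(x)=0$. The dual function is $q^\mu(w,B,t):=(1+t)\,\mathbb{E}_{\alpha\sim F}\big[\mathbf 1\{\frac{w^T\alpha}{1+t}\ge r(\alpha)\}\int_{r(\alpha)}^{w^T\alpha/(1+t)}H^\mu_\alpha(s)\,ds\big]+tB$, for $t>-1$. Let $K_w$ be the distribution of $w^T\alpha/r(\alpha)$ when $\alpha\sim F$, and $\Theta':=\{(w,B)\in\Theta: K_w\text{ has a continuous CDF}\}$. *)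

theory Defs
  imports "HOL-Probability.Probability"
begin

definition Theta :: "real \<Rightarrow> real \<Rightarrow> ((real^'d) \<times> real) set" where
  "Theta U Bmin = {(w, B). (\<forall>i. 0 < w $ i \<and> w $ i < U) \<and> Bmin < B \<and> B < U}"

text \<open>CDF of lambda^mu_alpha: distribution of w.alpha/(1+mu(w,B)) for (w,B) ~ G
  (G is concentrated on Theta).\<close>
definition lam_cdf ::
  "((real^'d) \<times> real) measure \<Rightarrow> real \<Rightarrow> real \<Rightarrow> ((real^'d) \<times> real \<Rightarrow> real)
    \<Rightarrow> real^'d \<Rightarrow> real \<Rightarrow> real" where
  "lam_cdf G U Bmin \<mu> \<alpha> x =
     measure G {\<theta> \<in> Theta U Bmin. (fst \<theta> \<bullet> \<alpha>) / (1 + \<mu> \<theta>) \<le> x}"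

definition Hfun ::
  "nat \<Rightarrow> ((real^'d) \<times> real) measure \<Rightarrow> real \<Rightarrow> real \<Rightarrow> ((real^'d) \<times> real \<Rightarrow> real)
    \<Rightarrow> real^'d \<Rightarrow> real \<Rightarrow> real" where
  "Hfun n G U Bmin \<mu> \<alpha> x = (lam_cdf G U Bmin \<mu> \<alpha> x) ^ (n - 1)"

definition sigma_fun ::
  "nat \<Rightarrow> ((real^'d) \<times> real) measure \<Rightarrow> real \<Rightarrow> real \<Rightarrow> ((real^'d) \<times> real \<Rightarrow> real)
    \<Rightarrow> (real^'d \<Rightarrow> real) \<Rightarrow> real^'d \<Rightarrow> real \<Rightarrow> real" where
  "sigma_fun n G U Bmin \<mu> r \<alpha> x =
     (if x < r \<alpha> then x
      else if Hfun n G U Bmin \<mu> \<alpha> x > 0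
        then x - (\<integral>s\<in>{r \<alpha>..x}. Hfun n G U Bmin \<mu> \<alpha> s / Hfun n G U Bmin \<mu> \<alpha> x \<partial>lborel)
        else r \<alpha>)"

text \<open>Dual function q^mu(w,B,t); the expectation over alpha ~ F is taken over A
  (F is concentrated on A).\<close>
definition q_fun ::
  "nat \<Rightarrow> (real^'d) measure \<Rightarrow> (real^'d) set \<Rightarrow> ((real^'d) \<times> real) measure \<Rightarrow> real \<Rightarrow> real
    \<Rightarrow> ((real^'d) \<times> real \<Rightarrow> real) \<Rightarrow> (real^'d \<Rightarrow> real) \<Rightarrow> real^'d \<Rightarrow> real \<Rightarrow> real \<Rightarrow> real" where
  "q_fun n F A G U Bmin \<mu> r w B t =
     (1 + t) * (\<integral>\<alpha>\<in>A.
        (if (w \<bullet> \<alpha>) / (1 + t) \<ge> r \<alpha> then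
           (\<integral>s\<in>{r \<alpha>..(w \<bullet> \<alpha>) / (1 + t)}. Hfun n G U Bmin \<mu> \<alpha> s \<partial>lborel)
         else 0) \<partial>F)
     + t * B"

definition K_cdf :: "(real^'d) measure \<Rightarrow> (real^'d) set \<Rightarrow> (real^'d \<Rightarrow> real) \<Rightarrow> real^'d \<Rightarrow> real \<Rightarrow> real" where
  "K_cdf F A r w x = measure F {\<alpha> \<in> A. (w \<bullet> \<alpha>) / r \<alpha> \<le> x}"

definition Theta' ::
  "(real^'d) measure \<Rightarrow> (real^'d) set \<Rightarrow> (real^'d \<Rightarrow> real) \<Rightarrow> real \<Rightarrow> real \<Rightarrow> ((real^'d) \<times> real) set" where
  "Theta' F A r U Bmin = {(w, B) \<in> Theta U Bmin. continuous_on UNIV (K_cdf F A r w)}"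

end

theory Submission
  imports Defs
begin

text \<open>
  Write \<open>q\<^sup>\<mu>(w,B,t) = E[\<psi>\<^sub>\<alpha>(t)] + t B\<close> with \<open>\<psi>\<^sub>\<alpha>(t) = (1+t) g\<^sub>\<alpha>(w\<bullet>\<alpha>/(1+t))\<close> and
  \<open>g\<^sub>\<alpha>(y)\<close> the integral of \<open>H\<^sub>\<alpha>\<close> over \<open>[r(\<alpha>), y]\<close>. Since \<open>H\<^sub>\<alpha>\<close> is monotone with values in [0,1], every \<open>\<psi>\<^sub>\<alpha>\<close> is
  \<open>4\<omega>\<close>-Lipschitz on \<open>(-1/2,\<infinity>)\<close>, so dominated convergence allows differentiating under
  the expectation once \<open>\<psi>\<^sub>\<alpha>\<close> is differentiable at \<open>t\<close> for \<open>F\<close>-almost every \<open>\<alpha>\<close>.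
  This can only fail at the kink \<open>w\<bullet>\<alpha>/(1+t) = r(\<alpha>)\<close>, an atom of \<open>K\<^sub>w\<close>, or where \<open>H\<^sub>\<alpha>\<close>
  jumps, i.e. at an atom of \<open>\<lambda>\<^sub>\<alpha>\<close>. The latter means that
  \<open>((1+t) w' - (1+\<mu>(w',B')) w) \<bullet> \<alpha> = 0\<close> on a \<open>G\<close>-positive set of \<open>(w',B')\<close>; by Fubini and
  the densities of \<open>F\<close> and \<open>G\<close> this is a null event, because \<open>\<alpha>\<close> ranges over a hyperplane
  unless \<open>w'\<close> is parallel to \<open>w\<close>, and those \<open>(w',B')\<close> form a set of dimension \<open>2 < d+1\<close>.
  Finally \<open>\<sigma>\<^sub>\<alpha>(x) H\<^sub>\<alpha>(x) = x H\<^sub>\<alpha>(x) - g\<^sub>\<alpha>(x)\<close> identifies the derivative.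
\<close>

lemma integral_upper_limit_lipschitz:
  fixes f :: "real \<Rightarrow> real"
  assumes f0: "\<And>x. 0 \<le> f x" and f1: "\<And>x. f x \<le> 1" and m: "mono f"
  shows "\<bar>integral {a..y1} f - integral {a..y2} f\<bar> \<le> \<bar>y1 - y2\<bar>"
proof -
  have int: "f integrable_on {u..v}" for u v
    using m by (intro integrable_on_mono_on) (auto simp: mono_on_def mono_def)
  have bound: "0 \<le> integral {u..v} f \<and> integral {u..v} f \<le> v - u" if "u \<le> v" for u v
  proof
    show "0 \<le> integral {u..v} f" using int f0 by (simp add: integral_nonneg)
    have "integral {u..v} f \<le> integral {u..v} (\<lambda>_. 1::real)"
      using int f1 by (intro integral_le) auto
    then show "integral {u..v} f \<le> v - u" using that by simp
  qed
  have empty: "integral {a..y} f = 0" if "y \<le> a" for y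
    using that by (cases "y < a") auto
  have key: "\<bar>integral {a..y1} f - integral {a..y2} f\<bar> \<le> y2 - y1" if "y1 \<le> y2" for y1 y2
  proof (cases "y1 \<le> a")
    case True
    then show ?thesis using bound[of a y2] empty[of y1] empty[of y2] that by (cases "y2 \<le> a") auto
  next
    case False
    have "integral {a..y1} f + integral {y1..y2} f = integral {a..y2} f"
      by (rule Henstock_Kurzweil_Integration.integral_combine) (use that int False in auto)
    then show ?thesis using bound[of y1 y2] that by auto
  qed
  show ?thesis using key[of y1 y2] key[of y2 y1] by (cases "y1 \<le> y2") auto
qed

lemma integral_upper_limit_abs_le:
  fixes f :: "real \<Rightarrow> real"
  assumes "\<And>x. 0 \<le> f x" "\<And>x. f x \<le> 1" "mono f" and a: "0 \<le> a"
  shows "\<bar>integral {a..y} f\<bar> \<le> \<bar>y\<bar>"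
proof (cases "y < a")
  case False
  have "\<bar>integral {a..y} f - integral {a..a} f\<bar> \<le> \<bar>y - a\<bar>"
    by (rule integral_upper_limit_lipschitz[OF assms(1-3)])
  then show ?thesis using False a by simp
qed simp

lemma integral_upper_limit_has_real_derivative:
  fixes f :: "real \<Rightarrow> real"
  assumes m: "mono f" and xa: "x \<noteq> a" and c: "a < x \<Longrightarrow> isCont f x"
  shows "((\<lambda>y. integral {a..y} f) has_real_derivative (if a \<le> x then f x else 0)) (at x)"
proof (cases "a < x")
  case True
  have "f integrable_on {a..x+1}"
    using m by (intro integrable_on_mono_on) (auto simp: mono_on_def mono_def)
  then have "((\<lambda>y. integral {a..y} f) has_vector_derivative f x) (at x within {a..x+1})"
    using True c by (intro integral_has_vector_derivative_continuous_at[where S="{}", simplified])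
      (auto intro: continuous_at_imp_continuous_at_within)
  then show ?thesis using True
    by (simp add: has_real_derivative_iff_has_vector_derivative at_within_Icc_at)
next
  case False
  have "((\<lambda>y. 0::real) has_real_derivative 0) (at x)" by simp
  then have "((\<lambda>y. integral {a..y} f) has_real_derivative 0) (at x)"
    by (rule has_field_derivative_transform_within_open[where S="{..<a}"]) (use False xa in auto)
  then show ?thesis using False xa by simp
qed

lemma rescaled_integral_has_real_derivative:
  fixes f :: "real \<Rightarrow> real"
  assumes m: "mono f" and t: "0 < 1 + t"
    and kink: "c/(1+t) \<noteq> a" and cont: "a < c/(1+t) \<Longrightarrow> isCont f (c/(1+t))"
  shows "((\<lambda>s. (1+s) * integral {a..c/(1+s)} f) has_real_derivative
     (if a \<le> c/(1+t) then integral {a..c/(1+t)} f - c/(1+t) * f (c/(1+t)) else 0)) (at t)"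
proof -
  define x where "x = c/(1+t)"
  define g where "g y = integral {a..y} f" for y
  define g' where "g' = (if a \<le> x then f x else 0)"
  have "(g has_real_derivative g') (at x)"
    unfolding g_def g'_def x_def by (rule integral_upper_limit_has_real_derivative[OF m kink cont])
  moreover have "((\<lambda>s. c/(1+s)) has_real_derivative -c/(1+t)^2) (at t)"
    using t by (auto intro!: derivative_eq_intros simp: power2_eq_square)
  ultimately have "((\<lambda>s. g (c/(1+s))) has_real_derivative g' * (-c/(1+t)^2)) (at t)"
    unfolding x_def by (rule DERIV_chain2)
  moreover have "((\<lambda>s. 1 + s) has_real_derivative 1) (at t)"
    by (auto intro!: derivative_eq_intros)
  ultimately have deriv: "((\<lambda>s. (1+s) * g (c/(1+s))) has_real_derivative
      1 * g x + g' * (-c/(1+t)^2) * (1+t)) (at t)"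
    unfolding x_def by (rule DERIV_mult[rotated])
  have "-c/(1+t)^2 * (1+t) = -x" using t by (simp add: x_def power2_eq_square)
  then have "1 * g x + g' * (-c/(1+t)^2) * (1+t) = (if a \<le> x then g x - x * f x else 0)"
    unfolding mult.assoc by (simp add: g_def g'_def)
  with deriv show ?thesis unfolding g_def x_def by simp
qed

lemma rescaled_integral_lipschitz:
  fixes f :: "real \<Rightarrow> real"
  assumes f: "\<And>x. 0 \<le> f x" "\<And>x. f x \<le> 1" "mono f" and a: "0 \<le> a"
    and c: "0 < c" and s1: "-1/2 < s1" and s2: "-1/2 < s2"
  shows "\<bar>(1+s1) * integral {a..c/(1+s1)} f - (1+s2) * integral {a..c/(1+s2)} f\<bar> \<le> 4*c*\<bar>s1 - s2\<bar>"
proof -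
  define u1 where "u1 = 1 + s1"
  define u2 where "u2 = 1 + s2"
  define g1 where "g1 = integral {a..c/u1} f"
  define g2 where "g2 = integral {a..c/u2} f"
  have u1: "u1 > 1/2" and u2: "u2 > 1/2" using s1 s2 by (auto simp: u1_def u2_def)
  have "\<bar>g1\<bar> \<le> \<bar>c/u1\<bar>" unfolding g1_def by (rule integral_upper_limit_abs_le[OF f a])
  also have "\<dots> \<le> 2*c" using u1 c by (simp add: field_simps)
  finally have b1: "\<bar>g1\<bar> \<le> 2*c" .
  have "u2 * \<bar>g1 - g2\<bar> \<le> u2 * \<bar>c/u1 - c/u2\<bar>"
    unfolding g1_def g2_def using u2 by (intro mult_left_mono integral_upper_limit_lipschitz[OF f]) auto
  also have "c/u1 - c/u2 = c * (u2 - u1) / (u1 * u2)" using u1 u2 by (simp add: field_simps)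
  also have "u2 * \<bar>c * (u2 - u1) / (u1 * u2)\<bar> = c * \<bar>u2 - u1\<bar> / u1"
    using u1 u2 c by (simp add: abs_mult)
  also have "\<dots> \<le> c * \<bar>u2 - u1\<bar> / (1/2)" using u1 c by (intro divide_left_mono) auto
  also have "\<dots> = 2*c*\<bar>u2 - u1\<bar>" by simp
  finally have b2: "u2 * \<bar>g1 - g2\<bar> \<le> 2*c*\<bar>u2 - u1\<bar>" .
  have "\<bar>u1*g1 - u2*g2\<bar> = \<bar>(u1 - u2)*g1 + u2*(g1 - g2)\<bar>" by (simp add: algebra_simps)
  also have "\<dots> \<le> \<bar>u1 - u2\<bar>*\<bar>g1\<bar> + u2*\<bar>g1 - g2\<bar>" using u2 by (simp add: abs_mult abs_triangle_ineq[THEN order_trans])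
  also have "\<dots> \<le> \<bar>u1 - u2\<bar>*(2*c) + 2*c*\<bar>u2 - u1\<bar>" using b1 b2 by (intro add_mono mult_left_mono) auto
  finally show ?thesis by (simp add: u1_def u2_def g1_def g2_def abs_minus_commute)
qed

lemma has_real_derivative_integral:
  fixes \<psi> :: "real \<Rightarrow> 'a \<Rightarrow> real"
  assumes S: "open S" "t \<in> S"
    and int: "\<And>s. s \<in> S \<Longrightarrow> integrable M (\<psi> s)"
    and C: "integrable M C"
    and lip: "\<And>s. s \<in> S \<Longrightarrow> AE x in M. \<bar>\<psi> s x - \<psi> t x\<bar> \<le> C x * \<bar>s - t\<bar>"
    and deriv: "AE x in M. ((\<lambda>s. \<psi> s x) has_real_derivative \<psi>' x) (at t)"
    and meas': "\<psi>' \<in> borel_measurable M"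
  shows "((\<lambda>s. \<integral>x. \<psi> s x \<partial>M) has_real_derivative (\<integral>x. \<psi>' x \<partial>M)) (at t)"
proof -
  obtain \<delta> where \<delta>: "0 < \<delta>" "ball t \<delta> \<subseteq> S" using S open_contains_ball by blast
  have "((\<lambda>s. ((\<integral>x. \<psi> s x \<partial>M) - (\<integral>x. \<psi> t x \<partial>M)) / (s - t)) \<longlongrightarrow> (\<integral>x. \<psi>' x \<partial>M))
      (at t within ball t \<delta>)"
    unfolding tendsto_at_iff_sequentially comp_def
  proof (intro allI impI)
    fix X :: "nat \<Rightarrow> real"
    assume X: "\<forall>i. X i \<in> ball t \<delta> - {t}" and Xt: "X \<longlonglongrightarrow> t"
    then have XS: "X i \<in> S" and Xne: "X i \<noteq> t" for i using \<delta> by auto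
    define q where "q i x = (\<psi> (X i) x - \<psi> t x) / (X i - t)" for i x
    have "(\<lambda>i. \<integral>x. q i x \<partial>M) \<longlonglongrightarrow> (\<integral>x. \<psi>' x \<partial>M)"
    proof (rule integral_dominated_convergence[where w=C])
      show "q i \<in> borel_measurable M" for i
        unfolding q_def[abs_def] using int[OF XS] int[OF S(2)] by measurable
      show "AE x in M. (\<lambda>i. q i x) \<longlonglongrightarrow> \<psi>' x"
        using deriv
      proof eventually_elim
        case (elim x)
        then have "((\<lambda>s. (\<psi> s x - \<psi> t x) / (s - t)) \<longlongrightarrow> \<psi>' x) (at t)"
          by (rule has_field_derivative_iff[THEN iffD1])
        then show ?case
          unfolding q_def tendsto_at_iff_sequentially comp_def using Xt Xne by blast
      qed
      show "AE x in M. norm (q i x) \<le> C x" for i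
        using lip[OF XS[of i]]
      proof eventually_elim
        case (elim x)
        then show ?case using Xne[of i] by (simp add: q_def divide_le_eq)
      qed
    qed (use C meas' in auto)
    moreover have "((\<integral>x. \<psi> (X i) x \<partial>M) - (\<integral>x. \<psi> t x \<partial>M)) / (X i - t) = (\<integral>x. q i x \<partial>M)" for i
      using int[OF XS] int[OF S(2)] by (simp add: q_def)
    ultimately show "(\<lambda>i. ((\<integral>x. \<psi> (X i) x \<partial>M) - (\<integral>x. \<psi> t x \<partial>M)) / (X i - t)) \<longlonglongrightarrow> (\<integral>x. \<psi>' x \<partial>M)"
      by simp
  qed
  then show ?thesis
    using at_within_open[of t "ball t \<delta>"] \<delta> by (simp add: has_field_derivative_iff)
qed

lemma isCont_measure_le_iff:
  fixes f :: "'a \<Rightarrow> real"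
  assumes "prob_space M" and f: "f \<in> borel_measurable M" and S: "S \<in> sets M"
    and AE_S: "AE x in M. x \<in> S"
  shows "isCont (\<lambda>y. measure M {x \<in> S. f x \<le> y}) c \<longleftrightarrow> measure M {x \<in> S. f x = c} = 0"
proof -
  interpret real_distribution "distr M borel f"
    using f by (simp add: prob_space.real_distribution_distr[OF assms(1)])
  have "measure M {x \<in> S. f x \<in> V} = measure (distr M borel f) V" if "V \<in> sets borel" for V
    using AE_S f S that by (subst measure_distr) (auto intro!: measure_eq_AE)
  from this[of "{..y}" for y] this[of "{c}"]
  have "(\<lambda>y. measure M {x \<in> S. f x \<le> y}) = cdf (distr M borel f)"
    and "measure M {x \<in> S. f x = c} = measure (distr M borel f) {c}"
    unfolding cdf_def by auto
  then show ?thesis using isCont_cdf by simp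
qed

lemma null_sets_first_parallel:
  fixes w :: "'a::euclidean_space"
  assumes "2 \<le> DIM('a)"
  shows "{\<theta> :: 'a \<times> real. \<exists>c. fst \<theta> = c *\<^sub>R w} \<in> null_sets lebesgue"
proof -
  let ?W = "{(w, 0::real), (0, 1)}"
  have sub: "{\<theta> :: 'a \<times> real. \<exists>c. fst \<theta> = c *\<^sub>R w} \<subseteq> span ?W"
  proof
    fix \<theta> :: "'a \<times> real" assume "\<theta> \<in> {\<theta>. \<exists>c. fst \<theta> = c *\<^sub>R w}"
    then obtain c where "fst \<theta> = c *\<^sub>R w" by auto
    then have "\<theta> = c *\<^sub>R (w, 0) + snd \<theta> *\<^sub>R (0, 1)" by (cases \<theta>) auto
    also have "\<dots> \<in> span ?W" by (intro span_add span_mul span_base) auto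
    finally show "\<theta> \<in> span ?W" .
  qed
  have "dim {\<theta> :: 'a \<times> real. \<exists>c. fst \<theta> = c *\<^sub>R w} \<le> card ?W"
    by (rule dim_le_card[OF sub]) simp
  also have "\<dots> < DIM('a \<times> real)" using assms by (simp add: card_insert_if)
  finally show ?thesis by (simp add: negligible_lowdim flip: negligible_iff_null_sets)
qed

locale pacing_setting =
  fixes n :: nat and U Bmin \<omega> :: real
    and A :: "(real^'d) set" and F :: "(real^'d) measure" and fF :: "real^'d \<Rightarrow> ennreal"
    and G :: "((real^'d) \<times> real) measure" and gG :: "(real^'d) \<times> real \<Rightarrow> ennreal"
    and r :: "real^'d \<Rightarrow> real" and \<mu> :: "(real^'d) \<times> real \<Rightarrow> real"
    and w :: "real^'d" and t :: real
  assumes d: "CARD('d) \<ge> 2"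
    and A_meas: "A \<in> sets lebesgue"
    and A_pos: "\<forall>\<alpha>\<in>A. \<forall>i. \<alpha> $ i > 0"
    and F_dens: "fF \<in> borel_measurable lebesgue" "F = density lebesgue fF"
    and F_prob: "prob_space F" and F_on_A: "AE \<alpha> in F. \<alpha> \<in> A"
    and G_dens: "gG \<in> borel_measurable lebesgue" "G = density lebesgue gG"
    and G_prob: "prob_space G" and G_on_Theta: "AE \<theta> in G. \<theta> \<in> Theta U Bmin"
    and r_meas: "r \<in> borel_measurable (restrict_space lebesgue A)"
    and r_pos: "\<forall>\<alpha>\<in>A. r \<alpha> > 0"
    and \<mu>_meas: "\<mu> \<in> borel_measurable (restrict_space lebesgue (Theta U Bmin))"
    and \<mu>_nonneg: "\<forall>\<theta>\<in>Theta U Bmin. \<mu> \<theta> \<ge> 0"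
    and w_pos: "\<forall>i. 0 < w $ i"
    and w_le: "\<forall>\<alpha>\<in>A. w \<bullet> \<alpha> \<le> \<omega>" and omega_pos: "0 < \<omega>"
    and K_cont: "continuous_on UNIV (K_cdf F A r w)"
    and t: "t > -1/2"
begin

abbreviation "\<Theta> \<equiv> (Theta U Bmin :: ((real^'d) \<times> real) set)"
abbreviation "L \<equiv> lam_cdf G U Bmin \<mu>"
abbreviation "H \<equiv> Hfun n G U Bmin \<mu>"

text \<open>\<open>\<mu>\<close> and \<open>r\<close> are only measurable on \<open>\<Theta>\<close> and \<open>A\<close>; these extensions are measurable everywhere.\<close>

definition \<mu>' :: "(real^'d) \<times> real \<Rightarrow> real" where "\<mu>' \<theta> = (if \<theta> \<in> \<Theta> then \<mu> \<theta> else 0)"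
definition r' :: "real^'d \<Rightarrow> real" where "r' \<alpha> = (if \<alpha> \<in> A then r \<alpha> else 1)"

sublocale F: prob_space F by (rule F_prob)
sublocale G: prob_space G by (rule G_prob)
sublocale GF: pair_sigma_finite G F ..

lemma sets_F: "sets F = sets lebesgue" and sets_G: "sets G = sets lebesgue"
  using F_dens G_dens by simp_all

lemma space_F[simp]: "space F = UNIV" and space_G[simp]: "space G = UNIV"
  using F_dens G_dens by simp_all

lemma borel_measurable_F: "f \<in> borel_measurable borel \<Longrightarrow> f \<in> borel_measurable F"
  and borel_measurable_G: "g \<in> borel_measurable borel \<Longrightarrow> g \<in> borel_measurable G"
  by (auto simp: measurable_cong_sets[OF sets_F refl] measurable_cong_sets[OF sets_G refl]
      intro: measurable_completion)

lemma AE_F_if_AE_lebesgue: "AE \<alpha> in lebesgue. P \<alpha> \<Longrightarrow> AE \<alpha> in F. P \<alpha>"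
  and AE_G_if_AE_lebesgue: "AE \<theta> in lebesgue. Q \<theta> \<Longrightarrow> AE \<theta> in G. Q \<theta>"
  using F_dens G_dens by (auto simp: AE_density elim: eventually_mono)

lemma Theta_sets[measurable]: "\<Theta> \<in> sets G"
proof -
  have "\<Theta> = box (vec 0) (vec U) \<times> {Bmin<..<U}" by (auto simp: Theta_def mem_box_cart)
  then have "open \<Theta>" by (simp add: open_Times open_box)
  then show ?thesis unfolding sets_G by (intro sets_completionI_sets) (simp add: borel_open)
qed

lemma A_sets[measurable]: "A \<in> sets F"
  unfolding sets_F by (rule A_meas)

lemma mu'_measurable[measurable]: "\<mu>' \<in> borel_measurable G"
  unfolding \<mu>'_def[abs_def] measurable_cong_sets[OF sets_G refl]
  using \<mu>_meas Theta_sets measurable_restrict_space_iff[of \<Theta> lebesgue 0 borel \<mu>] sets_G by simp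

lemma r'_measurable[measurable]: "r' \<in> borel_measurable F"
  unfolding r'_def[abs_def] measurable_cong_sets[OF sets_F refl]
  using r_meas A_meas measurable_restrict_space_iff[of A lebesgue 1 borel r] by simp

lemma id_measurable_F[measurable]: "(\<lambda>\<alpha>. \<alpha>) \<in> borel_measurable F"
  by (rule borel_measurable_F) simp

lemma fst_measurable_G[measurable]: "fst \<in> borel_measurable G"
  by (rule borel_measurable_G) (intro borel_measurable_continuous_onI continuous_intros)

lemma one_plus_mu_pos: "\<theta> \<in> \<Theta> \<Longrightarrow> 0 < 1 + \<mu> \<theta>"
  using \<mu>_nonneg by fastforce

lemma r'_pos: "0 < r' \<alpha>"
  using r_pos by (auto simp: r'_def)

lemma inner_w_pos: "\<alpha> \<in> A \<Longrightarrow> 0 < w \<bullet> \<alpha>"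
  unfolding inner_vec_def using w_pos A_pos by (intro sum_pos) auto

definition lam_events :: "(((real^'d) \<times> real) \<times> ((real^'d) \<times> real)) set" where
  "lam_events = {z \<in> space ((F \<Otimes>\<^sub>M lborel) \<Otimes>\<^sub>M G). snd z \<in> \<Theta> \<and>
   fst (snd z) \<bullet> fst (fst z) \<le> snd (fst z) * (1 + \<mu>' (snd z))}"

lemma lam_events_sets: "lam_events \<in> sets ((F \<Otimes>\<^sub>M lborel) \<Otimes>\<^sub>M G)"
  unfolding lam_events_def by measurable

lemma vimage_Pair_lam_events:
  "Pair (\<alpha>, u) -` lam_events = {\<theta> \<in> \<Theta>. (fst \<theta> \<bullet> \<alpha>) / (1 + \<mu> \<theta>) \<le> u}"
  unfolding lam_events_def
  by (auto simp: space_pair_measure \<mu>'_def pos_divide_le_eq mult.commute one_plus_mu_pos)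

lemma lam_cdf_sets: "{\<theta> \<in> \<Theta>. (fst \<theta> \<bullet> \<alpha>) / (1 + \<mu> \<theta>) \<le> u} \<in> sets G"
  unfolding vimage_Pair_lam_events[symmetric] using lam_events_sets by (rule sets_Pair1)

lemma Hfun_measurable[measurable]: "(\<lambda>z. H (fst z) (snd z)) \<in> borel_measurable (F \<Otimes>\<^sub>M lborel)"
proof -
  have "(\<lambda>z. emeasure G (Pair z -` lam_events)) \<in> borel_measurable (F \<Otimes>\<^sub>M lborel)"
    by (rule G.measurable_emeasure_Pair[OF lam_events_sets])
  then have "(\<lambda>z. L (fst z) (snd z)) \<in> borel_measurable (F \<Otimes>\<^sub>M lborel)"
    by (simp add: lam_cdf_def measure_def flip: vimage_Pair_lam_events)
  then show ?thesis unfolding Hfun_def by measurable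
qed

lemma Hfun_mono: "mono (H \<alpha>)"
  and Hfun_nonneg: "0 \<le> H \<alpha> u"
  and Hfun_le_1: "H \<alpha> u \<le> 1"
proof -
  have "mono (L \<alpha>)"
    unfolding mono_def lam_cdf_def by (intro allI impI G.finite_measure_mono lam_cdf_sets) auto
  moreover have "0 \<le> L \<alpha> u" "L \<alpha> u \<le> 1" for u unfolding lam_cdf_def by simp_all
  ultimately show "mono (H \<alpha>)" "0 \<le> H \<alpha> u" "H \<alpha> u \<le> 1"
    unfolding Hfun_def mono_def by (auto intro: power_mono power_le_one)
qed

lemma Hfun_set_integral_eq_integral:
  "(LINT u:{a..b}|lborel. H \<alpha> u) = integral {a..b} (H \<alpha>)"
proof -
  have "set_integrable lborel {a..b} (H \<alpha>)"
    unfolding set_integrable_def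
    by (intro integrableI_bounded_set_indicator[where B=1])
      (simp_all add: borel_measurable_mono[OF Hfun_mono] emeasure_lborel_Icc_eq Hfun_nonneg Hfun_le_1)
  then show ?thesis by (rule set_borel_integral_eq_integral(2))
qed

subsection \<open>Almost every \<open>\<alpha>\<close> avoids the kink and the jumps of \<open>H\<^sub>\<alpha>\<close>\<close>

lemma AE_not_kink: "AE \<alpha> in F. \<alpha> \<in> A \<longrightarrow> w \<bullet> \<alpha> / (1 + t) \<noteq> r \<alpha>"
proof -
  define k where "k \<alpha> = w \<bullet> \<alpha> / r' \<alpha>" for \<alpha>
  have k: "k \<in> borel_measurable F" unfolding k_def by measurable
  have "K_cdf F A r w = (\<lambda>y. measure F {\<alpha> \<in> A. k \<alpha> \<le> y})"
    unfolding K_cdf_def k_def r'_def by (intro ext arg_cong[where f="measure F"]) auto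
  then have "isCont (\<lambda>y. measure F {\<alpha> \<in> A. k \<alpha> \<le> y}) (1 + t)"
    using K_cont by (simp add: continuous_on_eq_continuous_at)
  then have "measure F {\<alpha> \<in> A. k \<alpha> = 1 + t} = 0"
    using isCont_measure_le_iff[OF F_prob k A_sets F_on_A] by simp
  then have "AE \<alpha> in F. \<alpha> \<notin> {\<alpha> \<in> A. k \<alpha> = 1 + t}"
    using k by (intro AE_not_in) (simp add: F.emeasure_eq_measure null_setsI)
  then show ?thesis
    by eventually_elim (use t r_pos in \<open>auto simp: k_def r'_def field_simps\<close>)
qed

text \<open>
  Bidder \<open>\<theta>\<close> bids exactly \<open>w \<bullet> \<alpha> / (1 + t)\<close> on item \<open>\<alpha>\<close> (\<open>tie_iff\<close>); written as a linear
  condition on \<open>\<alpha>\<close> so that it is visibly null in \<open>\<alpha>\<close> for most \<open>\<theta>\<close>.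
\<close>

definition tie :: "(real^'d) \<times> real \<Rightarrow> real^'d \<Rightarrow> bool" where
  "tie \<theta> \<alpha> \<longleftrightarrow> \<theta> \<in> \<Theta> \<and> \<alpha> \<in> A \<and> ((1+t) *\<^sub>R fst \<theta> - (1 + \<mu>' \<theta>) *\<^sub>R w) \<bullet> \<alpha> = 0"

lemma tie_iff: "tie \<theta> \<alpha> \<longleftrightarrow> \<theta> \<in> \<Theta> \<and> \<alpha> \<in> A \<and> fst \<theta> \<bullet> \<alpha> / (1 + \<mu> \<theta>) = w \<bullet> \<alpha> / (1 + t)"
proof -
  have "((1+t) *\<^sub>R fst \<theta> - (1 + \<mu> \<theta>) *\<^sub>R w) \<bullet> \<alpha> = 0 \<longleftrightarrow>
      fst \<theta> \<bullet> \<alpha> / (1 + \<mu> \<theta>) = w \<bullet> \<alpha> / (1 + t)" if "\<theta> \<in> \<Theta>"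
  proof -
    have "((1+t) *\<^sub>R fst \<theta> - (1 + \<mu> \<theta>) *\<^sub>R w) \<bullet> \<alpha> = (1+t) * (fst \<theta> \<bullet> \<alpha>) - (1 + \<mu> \<theta>) * (w \<bullet> \<alpha>)"
      by (simp only: inner_diff_left inner_scaleR_left)
    then show ?thesis using t one_plus_mu_pos[OF that] by (auto simp: frac_eq_eq algebra_simps)
  qed
  then show ?thesis by (auto simp: tie_def \<mu>'_def)
qed

lemma AE_AE_not_tie: "AE \<theta> in G. AE \<alpha> in F. \<not> tie \<theta> \<alpha>"
proof -
  have "AE \<theta> in G. \<theta> \<notin> {\<theta>. \<exists>c. fst \<theta> = c *\<^sub>R w}"
    by (intro AE_G_if_AE_lebesgue AE_not_in null_sets_first_parallel) (simp add: d)
  then show ?thesis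
  proof eventually_elim
    case (elim \<theta>)
    define v where "v = (1+t) *\<^sub>R fst \<theta> - (1 + \<mu>' \<theta>) *\<^sub>R w"
    have "v \<noteq> 0"
    proof
      assume "v = 0"
      then have "(1+t) *\<^sub>R fst \<theta> = (1 + \<mu>' \<theta>) *\<^sub>R w" by (simp add: v_def)
      then have "inverse (1+t) *\<^sub>R ((1+t) *\<^sub>R fst \<theta>) = ((1 + \<mu>' \<theta>) / (1+t)) *\<^sub>R w"
        by (simp add: divide_inverse mult.commute)
      then show False using elim t by auto
    qed
    then have "{\<alpha>. v \<bullet> \<alpha> = 0} \<in> null_sets lebesgue"
      using negligible_hyperplane negligible_iff_null_sets by blast
    then have "AE \<alpha> in F. \<alpha> \<notin> {\<alpha>. v \<bullet> \<alpha> = 0}"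
      by (intro AE_F_if_AE_lebesgue AE_not_in)
    then show ?case by eventually_elim (auto simp: tie_def v_def)
  qed
qed

lemma AE_Hfun_continuous: "AE \<alpha> in F. \<alpha> \<in> A \<longrightarrow> isCont (H \<alpha>) (w \<bullet> \<alpha> / (1 + t))"
proof -
  have "{z \<in> space (G \<Otimes>\<^sub>M F). tie (fst z) (snd z)} \<in> sets (G \<Otimes>\<^sub>M F)"
    unfolding tie_def by measurable
  then have "AE \<alpha> in F. AE \<theta> in G. \<not> tie \<theta> \<alpha>"
    using AE_AE_not_tie GF.AE_commute by simp
  then show ?thesis
  proof eventually_elim
    case (elim \<alpha>)
    define f where "f \<theta> = fst \<theta> \<bullet> \<alpha> / (1 + \<mu>' \<theta>)" for \<theta>
    have f: "f \<in> borel_measurable G" unfolding f_def by measurable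
    have eq: "{\<theta> \<in> \<Theta>. R (f \<theta>) y} = {\<theta> \<in> \<Theta>. R (fst \<theta> \<bullet> \<alpha> / (1 + \<mu> \<theta>)) y}"
      for y and R :: "real \<Rightarrow> real \<Rightarrow> bool" by (auto simp: f_def \<mu>'_def)
    show ?case
    proof
      assume "\<alpha> \<in> A"
      have "AE \<theta> in G. \<theta> \<notin> {\<theta> \<in> \<Theta>. f \<theta> = w \<bullet> \<alpha> / (1 + t)}"
        using elim by eventually_elim (simp add: eq tie_iff \<open>\<alpha> \<in> A\<close>)
      then have "measure G {\<theta> \<in> \<Theta>. f \<theta> = w \<bullet> \<alpha> / (1 + t)} = 0"
        using f by (subst (asm) AE_iff_measurable[OF _ refl]) (auto simp: measure_def)
      then have "isCont (L \<alpha>) (w \<bullet> \<alpha> / (1 + t))"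
        using isCont_measure_le_iff[OF G_prob f Theta_sets G_on_Theta]
        by (simp add: eq lam_cdf_def[abs_def])
      then show "isCont (H \<alpha>) (w \<bullet> \<alpha> / (1 + t))"
        unfolding Hfun_def[abs_def] by (intro continuous_intros)
    qed
  qed
qed

subsection \<open>Differentiation under the expectation\<close>

definition g :: "real^'d \<Rightarrow> real \<Rightarrow> real" where "g \<alpha> y = integral {r' \<alpha>..y} (H \<alpha>)"
definition \<psi> :: "real \<Rightarrow> real^'d \<Rightarrow> real" where
  "\<psi> s \<alpha> = indicator A \<alpha> * ((1+s) * g \<alpha> (w \<bullet> \<alpha> / (1+s)))"
definition \<psi>' :: "real^'d \<Rightarrow> real" where
  "\<psi>' \<alpha> = indicator A \<alpha> * (if r' \<alpha> \<le> w \<bullet> \<alpha> / (1+t)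
   then g \<alpha> (w \<bullet> \<alpha> / (1+t)) - w \<bullet> \<alpha> / (1+t) * H \<alpha> (w \<bullet> \<alpha> / (1+t)) else 0)"

lemma g_eq_lebesgue_integral: "g \<alpha> y = (\<integral>u. (if r' \<alpha> \<le> u \<and> u \<le> y then H \<alpha> u else 0) \<partial>lborel)"
  unfolding g_def Hfun_set_integral_eq_integral[symmetric] set_lebesgue_integral_def
  by (intro Bochner_Integration.integral_cong) (auto simp: indicator_def)

lemma g_measurable: "(\<lambda>\<alpha>. g \<alpha> (w \<bullet> \<alpha> / (1 + s))) \<in> borel_measurable F"
  unfolding g_eq_lebesgue_integral by measurable

lemma psi_measurable: "\<psi> s \<in> borel_measurable F"
  unfolding \<psi>_def[abs_def] using g_measurable by measurable

lemma psi'_measurable: "\<psi>' \<in> borel_measurable F"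
proof -
  have "(\<lambda>\<alpha>. (\<alpha>, w \<bullet> \<alpha> / (1 + t))) \<in> measurable F (F \<Otimes>\<^sub>M lborel)" by measurable
  from measurable_compose[OF this Hfun_measurable]
  have "(\<lambda>\<alpha>. H \<alpha> (w \<bullet> \<alpha> / (1 + t))) \<in> borel_measurable F" by simp
  then show ?thesis unfolding \<psi>'_def[abs_def] using g_measurable[of t] by measurable
qed

lemma psi_abs_le:
  assumes s: "-1/2 < s"
  shows "\<bar>\<psi> s \<alpha>\<bar> \<le> \<omega>"
proof (cases "\<alpha> \<in> A")
  case True
  have "\<bar>g \<alpha> (w \<bullet> \<alpha> / (1+s))\<bar> \<le> \<bar>w \<bullet> \<alpha> / (1+s)\<bar>"
    unfolding g_def
    by (intro integral_upper_limit_abs_le Hfun_nonneg Hfun_le_1 Hfun_mono less_imp_le[OF r'_pos])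
  then have "(1+s) * \<bar>g \<alpha> (w \<bullet> \<alpha> / (1+s))\<bar> \<le> (1+s) * \<bar>w \<bullet> \<alpha> / (1+s)\<bar>"
    using s by (intro mult_left_mono) auto
  also have "\<dots> \<le> \<omega>" using s inner_w_pos[OF True] w_le True by simp
  finally show ?thesis using True s by (simp add: \<psi>_def abs_mult)
qed (use omega_pos in \<open>simp add: \<psi>_def\<close>)

lemma psi_integrable: "-1/2 < s \<Longrightarrow> integrable F (\<psi> s)"
  by (rule Bochner_Integration.integrable_bound[where f="\<lambda>_. \<omega>"])
    (use psi_measurable psi_abs_le in \<open>auto simp: abs_of_pos[OF omega_pos]\<close>)

lemma psi_lipschitz:
  assumes "-1/2 < s1" "-1/2 < s2"
  shows "\<bar>\<psi> s1 \<alpha> - \<psi> s2 \<alpha>\<bar> \<le> 4*\<omega>*\<bar>s1 - s2\<bar>"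
proof (cases "\<alpha> \<in> A")
  case True
  have "\<bar>\<psi> s1 \<alpha> - \<psi> s2 \<alpha>\<bar> = \<bar>(1+s1) * integral {r' \<alpha>..w \<bullet> \<alpha> / (1+s1)} (H \<alpha>)
      - (1+s2) * integral {r' \<alpha>..w \<bullet> \<alpha> / (1+s2)} (H \<alpha>)\<bar>"
    using True by (simp add: \<psi>_def g_def)
  also have "\<dots> \<le> 4*(w \<bullet> \<alpha>)*\<bar>s1 - s2\<bar>"
    by (intro rescaled_integral_lipschitz Hfun_nonneg Hfun_le_1 Hfun_mono less_imp_le[OF r'_pos]
        inner_w_pos True assms)
  also have "\<dots> \<le> 4*\<omega>*\<bar>s1 - s2\<bar>" using w_le True by (intro mult_right_mono) auto
  finally show ?thesis .
qed (use omega_pos in \<open>simp add: \<psi>_def\<close>)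

lemma AE_psi_has_real_derivative: "AE \<alpha> in F. ((\<lambda>s. \<psi> s \<alpha>) has_real_derivative \<psi>' \<alpha>) (at t)"
  using AE_not_kink AE_Hfun_continuous
proof eventually_elim
  case (elim \<alpha>)
  show ?case
  proof (cases "\<alpha> \<in> A")
    case True
    then have "r' \<alpha> = r \<alpha>" by (simp add: r'_def)
    then have "((\<lambda>s. (1+s) * integral {r' \<alpha>..w \<bullet> \<alpha> / (1+s)} (H \<alpha>)) has_real_derivative
        (if r' \<alpha> \<le> w \<bullet> \<alpha> / (1+t)
         then integral {r' \<alpha>..w \<bullet> \<alpha> / (1+t)} (H \<alpha>) - w \<bullet> \<alpha> / (1+t) * H \<alpha> (w \<bullet> \<alpha> / (1+t))
         else 0)) (at t)"
      using elim True t by (intro rescaled_integral_has_real_derivative[OF Hfun_mono]) auto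
    then show ?thesis using True unfolding \<psi>_def[abs_def] \<psi>'_def g_def by simp
  qed (simp add: \<psi>_def \<psi>'_def)
qed

lemma expectation_psi_has_real_derivative:
  "((\<lambda>s. \<integral>\<alpha>. \<psi> s \<alpha> \<partial>F) has_real_derivative (\<integral>\<alpha>. \<psi>' \<alpha> \<partial>F)) (at t)"
  using t psi_integrable psi_lipschitz AE_psi_has_real_derivative psi'_measurable
  by (intro has_real_derivative_integral[where S="{-1/2<..}" and C="\<lambda>_. 4*\<omega>"]) auto

lemma q_fun_eq: "q_fun n F A G U Bmin \<mu> r w B s = (\<integral>\<alpha>. \<psi> s \<alpha> \<partial>F) + s * B"
proof -
  have "indicator A \<alpha> *\<^sub>R (if r \<alpha> \<le> w \<bullet> \<alpha> / (1 + s) then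
           LINT u:{r \<alpha>..w \<bullet> \<alpha> / (1 + s)}|lborel. H \<alpha> u else 0)
     = indicator A \<alpha> * g \<alpha> (w \<bullet> \<alpha> / (1 + s))" for \<alpha>
    by (cases "\<alpha> \<in> A") (simp_all add: g_def r'_def Hfun_set_integral_eq_integral)
  then have inner: "(\<integral>\<alpha>\<in>A. (if r \<alpha> \<le> w \<bullet> \<alpha> / (1 + s) then
           LINT u:{r \<alpha>..w \<bullet> \<alpha> / (1 + s)}|lborel. H \<alpha> u else 0) \<partial>F)
     = (\<integral>\<alpha>. indicator A \<alpha> * g \<alpha> (w \<bullet> \<alpha> / (1 + s)) \<partial>F)"
    unfolding set_lebesgue_integral_def by presburger
  then show ?thesis
    unfolding q_fun_def \<psi>_def inner
    by (subst integral_mult_right_zero[symmetric]) (simp only: mult.left_commute)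
qed

text \<open>In the degenerate case \<open>H\<^sub>\<alpha>(x) = 0\<close>, \<open>H\<^sub>\<alpha>\<close> vanishes on \<open>[r(\<alpha>), x]\<close> and both sides are \<open>0\<close>.\<close>

lemma sigma_fun_mult_Hfun:
  assumes "r \<alpha> \<le> x"
  shows "sigma_fun n G U Bmin \<mu> r \<alpha> x * H \<alpha> x = x * H \<alpha> x - integral {r \<alpha>..x} (H \<alpha>)"
proof (cases "H \<alpha> x > 0")
  case True
  have "(LINT s:{r \<alpha>..x}|lborel. H \<alpha> s / H \<alpha> x) = integral {r \<alpha>..x} (H \<alpha>) / H \<alpha> x"
    by (simp add: Hfun_set_integral_eq_integral)
  with True assms show ?thesis by (simp add: sigma_fun_def field_simps)
next
  case False
  then have "H \<alpha> u = 0" if "u \<le> x" for u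
    using monoD[OF Hfun_mono[of \<alpha>] that] Hfun_nonneg[of \<alpha> u] Hfun_nonneg[of \<alpha> x] by linarith
  then have "integral {r \<alpha>..x} (H \<alpha>) = integral {r \<alpha>..x} (\<lambda>_. 0::real)"
    by (intro integral_cong) auto
  moreover have "H \<alpha> x = 0" using False Hfun_nonneg[of \<alpha> x] by linarith
  ultimately show ?thesis using assms by (simp add: sigma_fun_def)
qed

lemma q_fun_has_real_derivative:
  "((\<lambda>t. q_fun n F A G U Bmin \<mu> r w B t) has_real_derivative
           (B - (\<integral>\<alpha>\<in>A.
              (if (w \<bullet> \<alpha>) / (1 + t) \<ge> r \<alpha> then
                 sigma_fun n G U Bmin \<mu> r \<alpha> ((w \<bullet> \<alpha>) / (1 + t))
                 * Hfun n G U Bmin \<mu> \<alpha> ((w \<bullet> \<alpha>) / (1 + t))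
               else 0) \<partial>F))) (at t)"
proof -
  have "indicator A \<alpha> *\<^sub>R (if (w \<bullet> \<alpha>) / (1 + t) \<ge> r \<alpha> then
         sigma_fun n G U Bmin \<mu> r \<alpha> ((w \<bullet> \<alpha>) / (1 + t)) * H \<alpha> ((w \<bullet> \<alpha>) / (1 + t)) else 0)
     = - \<psi>' \<alpha>" for \<alpha>
    by (cases "\<alpha> \<in> A") (simp_all add: \<psi>'_def r'_def g_def sigma_fun_mult_Hfun)
  then have "B - (\<integral>\<alpha>\<in>A. (if (w \<bullet> \<alpha>) / (1 + t) \<ge> r \<alpha> then
         sigma_fun n G U Bmin \<mu> r \<alpha> ((w \<bullet> \<alpha>) / (1 + t)) * H \<alpha> ((w \<bullet> \<alpha>) / (1 + t)) else 0) \<partial>F)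
     = (\<integral>\<alpha>. \<psi>' \<alpha> \<partial>F) + 1 * B"
    unfolding set_lebesgue_integral_def by simp
  moreover have "(\<lambda>s. q_fun n F A G U Bmin \<mu> r w B s) = (\<lambda>s. (\<integral>\<alpha>. \<psi> s \<alpha> \<partial>F) + s * B)"
    by (intro ext q_fun_eq)
  ultimately show ?thesis
    by (simp only:) (intro DERIV_add expectation_psi_has_real_derivative DERIV_cmult_right DERIV_ident)
qed

end

theorem mainTheorem13:
  fixes n :: nat and U Bmin \<omega> :: real
    and A :: "(real^'d) set" and F :: "(real^'d) measure" and fF :: "real^'d \<Rightarrow> ennreal"
    and G :: "((real^'d) \<times> real) measure" and gG :: "(real^'d) \<times> real \<Rightarrow> ennreal"
    and r :: "real^'d \<Rightarrow> real" and \<mu> :: "(real^'d) \<times> real \<Rightarrow> real"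
    and w :: "real^'d" and B t :: real
  assumes n: "n \<ge> 2" and d: "CARD('d) \<ge> 2"
    and U: "U > 0" and Bmin: "Bmin > 0"
    and A_meas: "A \<in> sets lebesgue"
    and A_pos: "\<forall>\<alpha>\<in>A. \<forall>i. \<alpha> $ i > 0"
    and F_dens: "fF \<in> borel_measurable lebesgue" "F = density lebesgue fF"
    and F_prob: "prob_space F" and F_on_A: "AE \<alpha> in F. \<alpha> \<in> A"
    and G_dens: "gG \<in> borel_measurable lebesgue" "G = density lebesgue gG"
    and G_prob: "prob_space G" and G_on_Theta: "AE \<theta> in G. \<theta> \<in> Theta U Bmin"
    and \<omega>: "\<omega> > 0" "\<forall>w'\<in>{w'. \<forall>i. 0 < w' $ i \<and> w' $ i < U}. \<forall>\<alpha>\<in>A. w' \<bullet> \<alpha> \<le> \<omega>"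
    and r_meas: "r \<in> borel_measurable (restrict_space lebesgue A)"
    and r_pos: "\<forall>\<alpha>\<in>A. r \<alpha> > 0"
    and \<mu>_meas: "\<mu> \<in> borel_measurable (restrict_space lebesgue (Theta U Bmin))"
    and \<mu>_nonneg: "\<forall>\<theta>\<in>Theta U Bmin. \<mu> \<theta> \<ge> 0"
    and wB: "(w, B) \<in> Theta' F A r U Bmin"
    and t: "t > -1/2"
  shows "((\<lambda>t. q_fun n F A G U Bmin \<mu> r w B t) has_real_derivative
           (B - (\<integral>\<alpha>\<in>A.
              (if (w \<bullet> \<alpha>) / (1 + t) \<ge> r \<alpha> then
                 sigma_fun n G U Bmin \<mu> r \<alpha> ((w \<bullet> \<alpha>) / (1 + t))
                 * Hfun n G U Bmin \<mu> \<alpha> ((w \<bullet> \<alpha>) / (1 + t))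
               else 0) \<partial>F))) (at t)"
proof -
  have w: "\<forall>i. 0 < w $ i \<and> w $ i < U" and K: "continuous_on UNIV (K_cdf F A r w)"
    using wB by (auto simp: Theta'_def Theta_def)
  then have w_pos: "\<forall>i. 0 < w $ i" and w_le: "\<forall>\<alpha>\<in>A. w \<bullet> \<alpha> \<le> \<omega>"
    using \<omega>(2) by auto
  interpret pacing_setting n U Bmin \<omega> A F fF G gG r \<mu> w t
    by (rule pacing_setting.intro) (fact d A_meas A_pos F_dens F_prob F_on_A G_dens G_prob G_on_Theta
        r_meas r_pos \<mu>_meas \<mu>_nonneg w_pos w_le \<omega>(1) K t)+
  show ?thesis by (rule q_fun_has_real_derivative)
qed

end
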